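(* Let $n\ge 1$, $a<b$, and let $f,g:[a,b]\to\mathbb{R}$ be $n$-times differentiable on $[a,b]$ with $g^{(n)}(a)\neq g^{(n)}(b)$. Then there exists $\eta\in(a,b)$ such that $$f(a)-T_n(f,\eta)(a)=\frac{f^{(n)}(b)-f^{(n)}(a)}{g^{(n)}(b)-g^{(n)}(a)}\cdot\bigl[g(a)-T_n(g,\eta)(a)\bigr].$$
   Context: $n$-times differentiable on $[a,b]$ means $n$-times differentiable on $(a,b)$ with the corresponding one-sided derivatives existing at the endpoints. $T_n(h,x_0)(x)=\sum_{k=0}^n \frac{h^{(k)}(x_0)}{k!}(x-x_0)^k$ denotes the $n$-th Taylor polynomial of $h$ at $x_0$, evaluated at $x$. *)

theory Defs
  imports Complex_Main
begin

text \<open>D is a family of derivatives of h = D 0 up to order n on [a,b]: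
  D (Suc k) is the derivative of D k on [a,b], taken within [a,b]
  (so one-sided at the endpoints).\<close>
definition n_times_differentiable_on ::
  "nat \<Rightarrow> (nat \<Rightarrow> real \<Rightarrow> real) \<Rightarrow> real set \<Rightarrow> bool" where
  "n_times_differentiable_on n D S \<longleftrightarrow>
     (\<forall>k<n. \<forall>x\<in>S. (D k has_real_derivative D (Suc k) x) (at x within S))"

definition taylor_poly :: "(nat \<Rightarrow> real \<Rightarrow> real) \<Rightarrow> nat \<Rightarrow> real \<Rightarrow> real \<Rightarrow> real" where
  "taylor_poly D n x0 x = (\<Sum>k\<le>n. D k x0 / fact k * (x - x0) ^ k)"

end

theory Submission
  imports Defs
begin

text \<open>With C the quotient of the increments of the n-th derivatives, H = f - C g satisfies
  H^(n)(a) = H^(n)(b), and the claim says H(a) = T_n(H,\<eta>)(a). This is a Flett-type mean value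
  theorem for u(y) = n! (H(a) - T_{n-1}(H,y)(a)) / (a - y)^n: the Peano form of Taylor's theorem
  extends u continuously to a by H^(n)(a), and u'(y) = n (u(y) - H^(n)(y)) / (a - y). Hence
  (u(b) - u(a)) u'(b) < 0 unless u(b) = u(a), so in either case u has an interior critical
  point \<eta>, and u'(\<eta>) = 0 is exactly the claim.\<close>

lemma taylor_poly_diff:
  "taylor_poly (\<lambda>k x. D k x - E k x) n x0 x = taylor_poly D n x0 x - taylor_poly E n x0 x"
  by (simp add: taylor_poly_def diff_divide_distrib left_diff_distrib sum_subtractf)

lemma taylor_poly_cmult:
  "taylor_poly (\<lambda>k x. c * D k x) n x0 x = c * taylor_poly D n x0 x"
  by (simp add: taylor_poly_def sum_distrib_left mult.assoc)

lemma taylor_poly_at_centre: "taylor_poly D n x0 x0 = D 0 x0"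
  by (induction n) (simp_all add: taylor_poly_def)

lemma n_times_differentiable_on_shift:
  assumes "n_times_differentiable_on n D S" "k \<le> n"
  shows "n_times_differentiable_on (n - k) (\<lambda>j. D (k + j)) S"
  using assms by (simp add: n_times_differentiable_on_def)

lemma has_real_derivative_taylor_poly_centre:
  fixes D :: "nat \<Rightarrow> real \<Rightarrow> real"
  assumes "\<forall>k\<le>m. (D k has_real_derivative D (Suc k) x) (at x within S)"
  shows "((\<lambda>y. taylor_poly D m y a) has_real_derivative D (Suc m) x / fact m * (a - x) ^ m)
           (at x within S)"
  using assms
proof (induction m)
  case 0
  then show ?case by (simp add: taylor_poly_def)
next
  case (Suc m)
  have IH: "((\<lambda>y. taylor_poly D m y a) has_real_derivative D (Suc m) x / fact m * (a - x) ^ m)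
      (at x within S)"
    using Suc by simp
  have "((\<lambda>y. D (Suc m) y / fact (Suc m) * (a - y) ^ Suc m) has_real_derivative
      D (Suc (Suc m)) x / fact (Suc m) * (a - x) ^ Suc m
        + D (Suc m) x / fact (Suc m) * (real (Suc m) * (a - x) ^ m * - 1))
      (at x within S)"
  proof -
    have deriv: "(D (Suc m) has_real_derivative D (Suc (Suc m)) x) (at x within S)"
      using Suc.prems by simp
    show ?thesis by (rule derivative_eq_intros deriv refl | simp)+
  qed
  moreover have "D (Suc m) x / fact (Suc m) * (real (Suc m) * (a - x) ^ m * - 1)
      = - (D (Suc m) x / fact m * (a - x) ^ m)"
    by (simp add: fact_Suc)
  ultimately have top: "((\<lambda>y. D (Suc m) y / fact (Suc m) * (a - y) ^ Suc m) has_real_derivative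
      D (Suc (Suc m)) x / fact (Suc m) * (a - x) ^ Suc m - D (Suc m) x / fact m * (a - x) ^ m)
      (at x within S)"
    by simp
  have "taylor_poly D (Suc m) = (\<lambda>y z. taylor_poly D m y z + D (Suc m) y / fact (Suc m) * (z - y) ^ Suc m)"
    by (simp add: taylor_poly_def fun_eq_iff)
  then show ?case using DERIV_add[OF IH top] by simp
qed

lemma has_real_derivative_taylor_poly:
  fixes D :: "nat \<Rightarrow> real \<Rightarrow> real"
  shows "(taylor_poly D (Suc N) x0 has_real_derivative taylor_poly (\<lambda>j. D (Suc j)) N x0 x)
           (at x within S)"
proof -
  have shift: "taylor_poly D (Suc N) x0 =
      (\<lambda>x. D 0 x0 + (\<Sum>j\<le>N. D (Suc j) x0 / fact (Suc j) * (x - x0) ^ Suc j))"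
    by (simp add: taylor_poly_def fun_eq_iff sum.atMost_Suc_shift del: sum.atMost_Suc)
  have "((\<lambda>x. D 0 x0 + (\<Sum>j\<le>N. D (Suc j) x0 / fact (Suc j) * (x - x0) ^ Suc j)) has_real_derivative
      0 + (\<Sum>j\<le>N. D (Suc j) x0 / fact (Suc j) * (real (Suc j) * (x - x0) ^ j))) (at x within S)"
  proof -
    have power: "((\<lambda>x. (x - x0) ^ Suc j) has_real_derivative real (Suc j) * (x - x0) ^ j)
        (at x within S)" for j
      by (rule derivative_eq_intros refl | simp)+
    show ?thesis by (intro DERIV_add DERIV_const DERIV_sum DERIV_cmult power)
  qed
  moreover have "(\<Sum>j\<le>N. D (Suc j) x0 / fact (Suc j) * (real (Suc j) * (x - x0) ^ j))
      = taylor_poly (\<lambda>j. D (Suc j)) N x0 x"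
    unfolding taylor_poly_def by (rule sum.cong) (auto simp: fact_Suc)
  ultimately show ?thesis unfolding shift by simp
qed

lemma lhopital_div_power_right:
  fixes f f' :: "real \<Rightarrow> real"
  assumes f0: "(f \<longlongrightarrow> 0) (at_right a)"
    and f': "\<forall>\<^sub>F x in at_right a. (f has_real_derivative f' x) (at x)"
    and lim: "((\<lambda>x. f' x / (a - x) ^ M) \<longlongrightarrow> 0) (at_right a)"
  shows "((\<lambda>x. f x / (a - x) ^ Suc M) \<longlongrightarrow> 0) (at_right a)"
proof (rule lhopital_right[OF f0 _ _ _ f', where g' = "\<lambda>x. - (real (Suc M) * (a - x) ^ M)"])
  have "((\<lambda>x. (a - x) ^ Suc M) \<longlongrightarrow> (a - a) ^ Suc M) (at_right a)"
    by (intro tendsto_intros)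
  then show "((\<lambda>x. (a - x) ^ Suc M) \<longlongrightarrow> 0) (at_right a)"
    by simp
  show "\<forall>\<^sub>F x in at_right a. (a - x) ^ Suc M \<noteq> 0"
    using eventually_at_right_less[of a] by (rule eventually_mono) simp
  show "\<forall>\<^sub>F x in at_right a. - (real (Suc M) * (a - x) ^ M) \<noteq> 0"
    using eventually_at_right_less[of a] by (rule eventually_mono) simp
  show "\<forall>\<^sub>F x in at_right a.
      ((\<lambda>x. (a - x) ^ Suc M) has_real_derivative - (real (Suc M) * (a - x) ^ M)) (at x)"
    by (intro always_eventually allI) (rule derivative_eq_intros refl | simp)+
  have "((\<lambda>x. - (f' x / (a - x) ^ M) / real (Suc M)) \<longlongrightarrow> 0) (at_right a)"
    using tendsto_divide[OF tendsto_minus[OF lim] tendsto_const[of "real (Suc M)"]] by simp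
  moreover have "(\<lambda>x. - (f' x / (a - x) ^ M) / real (Suc M))
      = (\<lambda>x. f' x / - (real (Suc M) * (a - x) ^ M))"
    by (rule ext) (simp add: divide_simps mult.commute)
  ultimately show "((\<lambda>x. f' x / - (real (Suc M) * (a - x) ^ M)) \<longlongrightarrow> 0) (at_right a)"
    by (simp only:)
qed

lemma tendsto_zero_div_power_if_derivs_vanish:
  fixes D :: "nat \<Rightarrow> real \<Rightarrow> real"
  assumes ab: "a < b" and "1 \<le> M" and "n_times_differentiable_on M D {a..b}"
    and "\<forall>j\<le>M. D j a = 0"
  shows "((\<lambda>x. D 0 x / (a - x) ^ M) \<longlongrightarrow> 0) (at_right a)"
  using assms(2-)
proof (induction M arbitrary: D rule: nat_induct_at_least)
  case base
  have "(D 0 has_real_derivative D 1 a) (at a within {a..b})"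
    using base(1) ab by (simp add: n_times_differentiable_on_def)
  moreover have "D 1 a = 0" using base(2) by simp
  ultimately have "((\<lambda>x. D 0 x / (x - a)) \<longlongrightarrow> 0) (at_right a)"
    using base ab by (simp add: has_field_derivative_iff at_within_Icc_at_right)
  then have "((\<lambda>x. - (D 0 x / (x - a))) \<longlongrightarrow> 0) (at_right a)"
    using tendsto_minus[of "\<lambda>x. D 0 x / (x - a)" 0 "at_right a"] by simp
  moreover have "- (D 0 x / (x - a)) = D 0 x / (a - x) ^ 1" for x
    by (simp add: divide_simps) (simp add: field_simps)
  ultimately show ?case by simp
next
  case (Suc M)
  have right: "\<forall>\<^sub>F x in at_right a. a < x \<and> x < b"
    using ab eventually_at_right[of a b] by auto
  have "(D 0 has_real_derivative D 1 a) (at a within {a..b})"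
    using Suc.prems(1) ab by (simp add: n_times_differentiable_on_def)
  then have "continuous (at a within {a..b}) (D 0)" by (rule DERIV_continuous)
  then have "(D 0 \<longlongrightarrow> 0) (at_right a)"
    using Suc.prems ab by (simp add: continuous_within at_within_Icc_at_right)
  moreover have "\<forall>\<^sub>F x in at_right a. (D 0 has_real_derivative D 1 x) (at x)"
    using right
  proof (rule eventually_mono)
    fix x assume "a < x \<and> x < b"
    moreover have "(D 0 has_real_derivative D 1 x) (at x within {a..b})"
      using Suc.prems(1) calculation by (simp add: n_times_differentiable_on_def)
    ultimately show "(D 0 has_real_derivative D 1 x) (at x)"
      using at_within_Icc_at[of a x b] by simp
  qed
  moreover have "((\<lambda>x. D 1 x / (a - x) ^ M) \<longlongrightarrow> 0) (at_right a)"
  proof -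
    have "n_times_differentiable_on M (\<lambda>k. D (Suc k)) {a..b}"
      using Suc.prems(1) by (simp add: n_times_differentiable_on_def)
    moreover have "\<forall>j\<le>M. D (Suc j) a = 0"
      using Suc.prems(2) by simp
    ultimately show ?thesis
      using Suc.IH[of "\<lambda>k. D (Suc k)"] by simp
  qed
  ultimately show ?case
    by (rule lhopital_div_power_right)
qed

lemma polynomial_jet_exists:
  fixes D :: "nat \<Rightarrow> real \<Rightarrow> real"
  obtains p :: "nat \<Rightarrow> real \<Rightarrow> real"
  where "\<And>k x S. (p k has_real_derivative p (Suc k) x) (at x within S)"
    and "\<And>k. k \<le> Suc m \<Longrightarrow> p k a = D k a"
    and "\<And>y. taylor_poly p m y a = D 0 a - D (Suc m) a / fact (Suc m) * (a - y) ^ Suc m"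
proof -
  text \<open>p k is the Taylor polynomial at a built from D k a, ..., D (Suc m) a; padding
    these values with zeros makes p a chain of derivatives for every k.\<close>
  define c where "c j = (if j \<le> Suc m then D j a else 0)" for j
  define p where "p k = taylor_poly (\<lambda>j _. c (k + j)) (Suc m) a" for k
  have p_deriv: "(p k has_real_derivative p (Suc k) x) (at x within S)" for k x S
  proof -
    have "p (Suc k) x = taylor_poly (\<lambda>j _. c (k + Suc j)) m a x"
      by (simp add: p_def taylor_poly_def c_def)
    then show ?thesis
      unfolding p_def using has_real_derivative_taylor_poly[of "\<lambda>j _. c (k + j)"] by simp
  qed
  have p_at_centre: "p k a = c k" for k
    by (simp add: p_def taylor_poly_at_centre)
  have p_top: "p (Suc m) y = D (Suc m) a" for y
    by (simp add: p_def taylor_poly_def c_def sum.atMost_shift del: sum.atMost_Suc)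
  have expansion: "taylor_poly p m y a = D 0 a - D (Suc m) a / fact (Suc m) * (a - y) ^ Suc m"
    for y
  proof -
    have "p (Suc (Suc m)) = (\<lambda>_. 0)"
      by (simp add: p_def taylor_poly_def c_def fun_eq_iff)
    then have "((\<lambda>y. taylor_poly p (Suc m) y a) has_real_derivative 0) (at x)" for x
      using has_real_derivative_taylor_poly_centre[of "Suc m" p x UNIV a] p_deriv by simp
    then have "taylor_poly p (Suc m) y a = taylor_poly p (Suc m) a a"
      using DERIV_isconst_all[of "\<lambda>y. taylor_poly p (Suc m) y a" y a] by blast
    also have "\<dots> = D 0 a"
      by (simp add: taylor_poly_at_centre p_at_centre c_def)
    finally show ?thesis
      by (simp add: taylor_poly_def p_top)
  qed
  show ?thesis
  proof (rule that)
    show "p k a = D k a" if "k \<le> Suc m" for k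
      using that by (simp add: p_at_centre c_def)
  qed (fact p_deriv expansion)+
qed

lemma taylor_poly_div_power:
  assumes "x \<noteq> x0"
  shows "taylor_poly D m x0 x / (x - x0) ^ Suc m
           = (\<Sum>k\<le>m. D k x0 / (x - x0) ^ (Suc m - k) / fact k)"
  unfolding taylor_poly_def sum_divide_distrib
proof (rule sum.cong)
  fix k assume "k \<in> {..m}"
  then have "(x - x0) ^ Suc m = (x - x0) ^ k * (x - x0) ^ (Suc m - k)"
    by (simp flip: power_add)
  then show "D k x0 / fact k * (x - x0) ^ k / (x - x0) ^ Suc m
      = D k x0 / (x - x0) ^ (Suc m - k) / fact k"
    using assms by (simp add: field_simps)
qed simp

lemma taylor_remainder_quotient_tendsto:
  fixes D :: "nat \<Rightarrow> real \<Rightarrow> real"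
  assumes ab: "a < b" and diff: "n_times_differentiable_on (Suc m) D {a..b}"
  shows "((\<lambda>y. (D 0 a - taylor_poly D m y a) / (a - y) ^ Suc m) \<longlongrightarrow> D (Suc m) a / fact (Suc m))
           (at_right a)"
proof -
  obtain p where p_deriv: "\<And>k x S. (p k has_real_derivative p (Suc k) x) (at x within S)"
    and p_at_centre: "\<And>k. k \<le> Suc m \<Longrightarrow> p k a = D k a"
    and poly_expansion: "\<And>y. taylor_poly p m y a = D 0 a - D (Suc m) a / fact (Suc m) * (a - y) ^ Suc m"
    using polynomial_jet_exists by blast
  define r where "r k = (\<lambda>x. D k x - p k x)" for k
  have r_lim: "((\<lambda>y. r k y / (a - y) ^ (Suc m - k)) \<longlongrightarrow> 0) (at_right a)" if "k \<le> m" for k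
  proof -
    have "n_times_differentiable_on (Suc m - k) (\<lambda>j. r (k + j)) {a..b}"
      using n_times_differentiable_on_shift[OF diff, of k] that p_deriv
      by (auto simp: n_times_differentiable_on_def r_def intro!: DERIV_diff)
    moreover have "\<forall>j\<le>Suc m - k. r (k + j) a = 0"
      using that by (simp add: r_def p_at_centre)
    ultimately show ?thesis
      using tendsto_zero_div_power_if_derivs_vanish[OF ab, of "Suc m - k" "\<lambda>j. r (k + j)"] that
      by simp
  qed
  have split: "(D 0 a - taylor_poly D m y a) / (a - y) ^ Suc m
      = D (Suc m) a / fact (Suc m) - (\<Sum>k\<le>m. r k y / (a - y) ^ (Suc m - k) / fact k)"
    if "a < y" for y
  proof -
    have "taylor_poly D m y a = taylor_poly p m y a + taylor_poly r m y a"
      using taylor_poly_diff[of D p m y a] by (simp add: r_def[abs_def])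
    moreover have "taylor_poly r m y a / (a - y) ^ Suc m
        = (\<Sum>k\<le>m. r k y / (a - y) ^ (Suc m - k) / fact k)"
      using taylor_poly_div_power[of a y r m] that by simp
    ultimately show ?thesis
      using that by (simp add: poly_expansion diff_divide_distrib)
  qed
  have "((\<lambda>y. D (Suc m) a / fact (Suc m) - (\<Sum>k\<le>m. r k y / (a - y) ^ (Suc m - k) / fact k))
      \<longlongrightarrow> D (Suc m) a / fact (Suc m) - (\<Sum>k\<le>m. 0 / fact k)) (at_right a)"
    by (intro tendsto_intros tendsto_sum r_lim) auto
  then have "((\<lambda>y. D (Suc m) a / fact (Suc m) - (\<Sum>k\<le>m. r k y / (a - y) ^ (Suc m - k) / fact k))
      \<longlongrightarrow> D (Suc m) a / fact (Suc m)) (at_right a)"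
    by simp
  moreover have "\<forall>\<^sub>F y in at_right a.
      D (Suc m) a / fact (Suc m) - (\<Sum>k\<le>m. r k y / (a - y) ^ (Suc m - k) / fact k)
        = (D 0 a - taylor_poly D m y a) / (a - y) ^ Suc m"
    using eventually_at_right_less[of a] by (rule eventually_mono) (rule split[symmetric])
  ultimately show ?thesis
    by (rule Lim_transform_eventually)
qed

lemma has_real_derivative_at_interior_Icc:
  assumes "(u has_real_derivative l) (at x within {a..b})" "a < x" "x < b"
  shows "(u has_real_derivative l) (at x)"
  using assms at_within_Icc_at[of a x b] by simp

lemma critical_point_of_rise_and_falling_end:
  fixes u u' :: "real \<Rightarrow> real"
  assumes ab: "a < b" and cont: "continuous_on {a..b} u"
    and der: "\<forall>x\<in>{a<..b}. (u has_real_derivative u' x) (at x within {a..b})"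
    and rise: "u a < u b" and fall: "u' b < 0"
  shows "\<exists>\<eta>\<in>{a<..<b}. u' \<eta> = 0"
proof -
  obtain e where e: "e \<in> {a..b}" and emax: "\<forall>y\<in>{a..b}. u y \<le> u e"
    using continuous_attains_sup[OF compact_Icc _ cont] ab by auto
  obtain d where "d > 0" and d: "\<forall>h>0. b - h \<in> {a..b} \<longrightarrow> h < d \<longrightarrow> u b < u (b - h)"
    using has_real_derivative_neg_dec_left[OF _ fall] der ab by fastforce
  define h where "h = min d (b - a) / 2"
  have "h > 0" "h < d" "b - h \<in> {a..b}"
    using \<open>d > 0\<close> ab by (auto simp: h_def min_def field_simps)
  with d emax have "e \<noteq> b" by force
  moreover have "e \<noteq> a"
    using emax ab rise by (metis atLeastAtMost_iff less_le_not_le order_refl)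
  ultimately have ei: "a < e" "e < b" using e by auto
  have "u' e = 0"
  proof (rule DERIV_local_max)
    show "(u has_real_derivative u' e) (at e)"
      using der ei by (intro has_real_derivative_at_interior_Icc[of _ _ _ a b]) auto
    show "\<forall>y. \<bar>e - y\<bar> < min (e - a) (b - e) \<longrightarrow> u y \<le> u e"
      using emax by (auto simp: abs_if split: if_splits)
  qed (use ei in simp)
  with ei show ?thesis by auto
qed

lemma flett_critical_point:
  fixes u u' :: "real \<Rightarrow> real"
  assumes ab: "a < b" and cont: "continuous_on {a..b} u"
    and der: "\<forall>x\<in>{a<..b}. (u has_real_derivative u' x) (at x within {a..b})"
    and opposite: "u b = u a \<or> (u b - u a) * u' b < 0"
  shows "\<exists>\<eta>\<in>{a<..<b}. u' \<eta> = 0"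
proof -
  have ider: "(u has_real_derivative u' x) (at x)" if "a < x" "x < b" for x
    using der that by (intro has_real_derivative_at_interior_Icc[of _ _ _ a b]) auto
  consider "u b = u a" | "u a < u b" "u' b < 0" | "u b < u a" "0 < u' b"
    using opposite by (auto simp: mult_less_0_iff)
  then show ?thesis
  proof cases
    case 1
    then obtain z where z: "a < z" "z < b" "(u has_real_derivative 0) (at z)"
      using Rolle[OF ab _ cont] ider by (metis real_differentiable_def)
    then have "u' z = 0" using ider DERIV_unique by blast
    with z show ?thesis by auto
  next
    case 2
    then show ?thesis using critical_point_of_rise_and_falling_end[OF ab cont der] by blast
  next
    case 3
    have "\<exists>\<eta>\<in>{a<..<b}. - u' \<eta> = 0"
      using 3 der by (intro critical_point_of_rise_and_falling_end[OF ab continuous_on_minus[OF cont]])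
        (auto intro: DERIV_minus)
    then show ?thesis by auto
  qed
qed

definition taylor_remainder_ratio :: "(nat \<Rightarrow> real \<Rightarrow> real) \<Rightarrow> nat \<Rightarrow> real \<Rightarrow> real \<Rightarrow> real" where
  "taylor_remainder_ratio D m a y =
     (if y = a then D (Suc m) a
      else fact (Suc m) * (D 0 a - taylor_poly D m y a) / (a - y) ^ Suc m)"

lemma has_real_derivative_taylor_remainder_ratio:
  fixes D :: "nat \<Rightarrow> real \<Rightarrow> real"
  assumes "x \<noteq> a" and "\<forall>k\<le>m. (D k has_real_derivative D (Suc k) x) (at x within S)"
  shows "(taylor_remainder_ratio D m a has_real_derivative
           real (Suc m) * (taylor_remainder_ratio D m a x - D (Suc m) x) / (a - x)) (at x within S)"
proof -
  define P where "P y = D 0 a - taylor_poly D m y a" for y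
  from DERIV_diff[OF DERIV_const has_real_derivative_taylor_poly_centre[OF assms(2)]]
  have "(P has_real_derivative - (D (Suc m) x / fact m * (a - x) ^ m)) (at x within S)"
    unfolding P_def[abs_def] by simp
  moreover have "((\<lambda>y. (a - y) ^ Suc m) has_real_derivative - (real (Suc m) * (a - x) ^ m))
      (at x within S)"
    by (rule derivative_eq_intros refl | simp)+
  ultimately have "((\<lambda>y. fact (Suc m) * P y / (a - y) ^ Suc m) has_real_derivative
      (fact (Suc m) * - (D (Suc m) x / fact m * (a - x) ^ m) * (a - x) ^ Suc m
        - - (real (Suc m) * (a - x) ^ m) * (fact (Suc m) * P x)) / ((a - x) ^ Suc m) ^ Suc (Suc 0))
      (at x within S)"
    using assms(1) by (intro DERIV_quotient DERIV_cmult) auto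
  moreover have "(fact (Suc m) * - (D (Suc m) x / fact m * (a - x) ^ m) * (a - x) ^ Suc m
        - - (real (Suc m) * (a - x) ^ m) * (fact (Suc m) * P x)) / ((a - x) ^ Suc m) ^ Suc (Suc 0)
      = real (Suc m) * (fact (Suc m) * P x / (a - x) ^ Suc m - D (Suc m) x) / (a - x)"
  proof -
    have quotient_rule: "(s * G * - (h / G * q) * (t * q) - - (s * q) * (s * G * p)) / (t * q) ^ Suc (Suc 0)
        = s * (s * G * p / (t * q) - h) / t"
      if "t \<noteq> 0" "q \<noteq> 0" "G \<noteq> 0" for s G h q t p :: real
      using that by (simp add: field_simps power2_eq_square)
    have "a - x \<noteq> 0" "(a - x) ^ m \<noteq> 0" using assms(1) by auto
    from quotient_rule[OF this fact_nonzero, where s = "real (Suc m)" and h = "D (Suc m) x"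
        and p = "P x"]
    show ?thesis
      by (simp only: fact_Suc power_Suc)
  qed
  ultimately have "((\<lambda>y. fact (Suc m) * P y / (a - y) ^ Suc m) has_real_derivative
      real (Suc m) * (taylor_remainder_ratio D m a x - D (Suc m) x) / (a - x)) (at x within S)"
    using assms(1) by (simp add: taylor_remainder_ratio_def P_def)
  moreover have "\<forall>\<^sub>F y in at x within S.
      fact (Suc m) * P y / (a - y) ^ Suc m = taylor_remainder_ratio D m a y"
    using eventually_neq_at_within[of a x S]
    by (rule eventually_mono) (simp add: taylor_remainder_ratio_def P_def)
  moreover have "fact (Suc m) * P x / (a - x) ^ Suc m = taylor_remainder_ratio D m a x"
    using assms(1) by (simp add: taylor_remainder_ratio_def P_def)
  ultimately show ?thesis
    using has_field_derivative_cong_eventually[of "\<lambda>y. fact (Suc m) * P y / (a - y) ^ Suc m"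
        "taylor_remainder_ratio D m a" x S]
    by blast
qed

lemma continuous_on_taylor_remainder_ratio:
  fixes D :: "nat \<Rightarrow> real \<Rightarrow> real"
  assumes ab: "a < b" and diff: "n_times_differentiable_on (Suc m) D {a..b}"
  shows "continuous_on {a..b} (taylor_remainder_ratio D m a)"
  unfolding continuous_on_eq_continuous_within
proof
  fix x assume x: "x \<in> {a..b}"
  show "continuous (at x within {a..b}) (taylor_remainder_ratio D m a)"
  proof (cases "x = a")
    case True
    have "((\<lambda>y. fact (Suc m) * ((D 0 a - taylor_poly D m y a) / (a - y) ^ Suc m))
        \<longlongrightarrow> fact (Suc m) * (D (Suc m) a / fact (Suc m))) (at_right a)"
      by (intro tendsto_mult tendsto_const taylor_remainder_quotient_tendsto[OF ab diff])
    moreover have "\<forall>\<^sub>F y in at_right a.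
        fact (Suc m) * ((D 0 a - taylor_poly D m y a) / (a - y) ^ Suc m) = taylor_remainder_ratio D m a y"
      using eventually_at_right_less[of a] by (rule eventually_mono) (simp add: taylor_remainder_ratio_def)
    ultimately have "(taylor_remainder_ratio D m a \<longlongrightarrow> taylor_remainder_ratio D m a a) (at_right a)"
      by (auto simp: taylor_remainder_ratio_def intro: Lim_transform_eventually)
    with True ab show ?thesis
      by (simp add: continuous_within at_within_Icc_at_right)
  next
    case False
    have "\<forall>k\<le>m. (D k has_real_derivative D (Suc k) x) (at x within {a..b})"
      using diff x by (simp add: n_times_differentiable_on_def)
    with False show ?thesis
      by (blast intro: DERIV_continuous has_real_derivative_taylor_remainder_ratio)
  qed
qed

lemma taylor_flett_mean_value:
  fixes D :: "nat \<Rightarrow> real \<Rightarrow> real"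
  assumes ab: "a < b" and diff: "n_times_differentiable_on (Suc m) D {a..b}"
    and ends: "D (Suc m) a = D (Suc m) b"
  shows "\<exists>\<eta>\<in>{a<..<b}. taylor_poly D (Suc m) \<eta> a = D 0 a"
proof -
  define u where "u = taylor_remainder_ratio D m a"
  define u' where "u' y = real (Suc m) * (u y - D (Suc m) y) / (a - y)" for y
  have "\<forall>x\<in>{a<..b}. (u has_real_derivative u' x) (at x within {a..b})"
  proof
    fix x assume x: "x \<in> {a<..b}"
    then have "\<forall>k\<le>m. (D k has_real_derivative D (Suc k) x) (at x within {a..b})"
      using diff by (simp add: n_times_differentiable_on_def)
    with x show "(u has_real_derivative u' x) (at x within {a..b})"
      unfolding u_def u'_def by (intro has_real_derivative_taylor_remainder_ratio) auto
  qed
  moreover have "u b = u a \<or> (u b - u a) * u' b < 0"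
  proof (cases "u b = u a")
    case False
    then have "0 < real (Suc m) * (u b - u a) ^ 2" by simp
    with ab have "real (Suc m) * (u b - u a) ^ 2 / (a - b) < 0" by (simp add: divide_pos_neg)
    moreover have "(u b - u a) * u' b = real (Suc m) * (u b - u a) ^ 2 / (a - b)"
      using ab ends by (simp add: u'_def u_def taylor_remainder_ratio_def power2_eq_square)
    ultimately show ?thesis by simp
  qed simp
  ultimately obtain \<eta> where \<eta>: "\<eta> \<in> {a<..<b}" "u' \<eta> = 0"
    using flett_critical_point[OF ab continuous_on_taylor_remainder_ratio[OF ab diff]]
    unfolding u_def by blast
  then have "fact (Suc m) * (D 0 a - taylor_poly D m \<eta> a) / (a - \<eta>) ^ Suc m = D (Suc m) \<eta>"
    by (simp add: u'_def u_def taylor_remainder_ratio_def)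
  moreover have "(a - \<eta>) ^ Suc m \<noteq> 0" using \<eta>(1) by simp
  ultimately have "D 0 a - taylor_poly D m \<eta> a = D (Suc m) \<eta> / fact (Suc m) * (a - \<eta>) ^ Suc m"
    by (simp add: divide_eq_eq eq_divide_eq mult.commute del: fact_Suc of_nat_Suc)
  moreover have "taylor_poly D (Suc m) \<eta> a
      = taylor_poly D m \<eta> a + D (Suc m) \<eta> / fact (Suc m) * (a - \<eta>) ^ Suc m"
    by (simp add: taylor_poly_def del: fact_Suc)
  ultimately have "taylor_poly D (Suc m) \<eta> a = D 0 a"
    by linarith
  with \<eta>(1) show ?thesis by blast
qed

theorem mainTheorem13:
  fixes f g :: "real \<Rightarrow> real" and Df Dg :: "nat \<Rightarrow> real \<Rightarrow> real"
    and n :: nat and a b :: real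
  assumes "n \<ge> 1" and "a < b"
    and "Df 0 = f" and "Dg 0 = g"
    and "n_times_differentiable_on n Df {a..b}"
    and "n_times_differentiable_on n Dg {a..b}"
    and "Dg n a \<noteq> Dg n b"
  shows "\<exists>\<eta>\<in>{a<..<b}. f a - taylor_poly Df n \<eta> a =
           (Df n b - Df n a) / (Dg n b - Dg n a) * (g a - taylor_poly Dg n \<eta> a)"
proof -
  obtain m where n: "n = Suc m" using assms(1) by (cases n) auto
  define C where "C = (Df n b - Df n a) / (Dg n b - Dg n a)"
  define H where "H = (\<lambda>k x. Df k x - C * Dg k x)"
  have "n_times_differentiable_on n H {a..b}"
    using assms(5,6) by (auto simp: n_times_differentiable_on_def H_def intro!: DERIV_diff DERIV_cmult)
  moreover have "H n a = H n b"
    using assms(7) by (simp add: H_def C_def field_simps)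
  ultimately obtain \<eta> where \<eta>: "\<eta> \<in> {a<..<b}" "taylor_poly H n \<eta> a = H 0 a"
    using taylor_flett_mean_value[OF assms(2)] n by blast
  have "taylor_poly H n \<eta> a = taylor_poly Df n \<eta> a - C * taylor_poly Dg n \<eta> a"
    using taylor_poly_diff[of Df "\<lambda>k x. C * Dg k x"] by (simp add: H_def taylor_poly_cmult)
  with \<eta>(2) have "f a - taylor_poly Df n \<eta> a = C * (g a - taylor_poly Dg n \<eta> a)"
    using assms(3,4) by (simp add: H_def algebra_simps)
  with \<eta>(1) show ?thesis
    unfolding C_def by blast
qed

end
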